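(* Let $N\ge 1$ and let $f,g,h,s,\mu,\theta,\nu$ be the following Casoratians built from the column vector $\boldsymbol\psi(l)$ defined in the context: $$f=|0,1,\dots,N-1|,\quad g=|0,\dots,N-2,N|,\quad h=|0,\dots,N-2,N+1|,\quad s=|0,\dots,N-3,N-1,N|,$$ $$\mu=|0,\dots,N-2,N+2|,\quad \theta=|0,\dots,N-3,N-1,N+1|,\quad \nu=|0,\dots,N-4,N-2,N-1,N|.$$ Then, as functions of $(n,m)\in\mathbb Z^2$ (with $\alpha,\beta$ fixed), they satisfy the bilinear system (GD-4 (B-2) bilinear form) $$\widetilde f(pg+h)-\widetilde g(pf+g)+f\widetilde s=0,\qquad \widehat f(qg+h)-\widehat g(qf+g)+f\widehat s=0,$$ $$\widetilde f(ph+\mu)-\widetilde h(pf+g)+f\widetilde\theta=0,\qquad \widehat f(qh+\mu)-\widehat h(qf+g)+f\widehat\theta=0,$$ $$\widetilde f(ps+\theta)-f(p\widetilde s-\widetilde\nu)-\widetilde g s=0,\qquad \widehat f(qs+\theta)-f(q\widehat s-\widehat\nu)-\widehat g s=0,$$ $$(p-q)(\widetilde f\widehat f-f\widehat{\widetilde f})+\widetilde f\widehat g-\widehat f\widetilde g=0,$$ $$\frac{G(-p,-q)}{p-q}(f\widehat{\widetilde f}-\widetilde f\widehat f)+H(p,q)(g\widehat{\widetilde f}-f\widehat{\widetilde g})-(p+q-\alpha_3)(g\widehat{\widetilde g}-f\widehat{\widetilde h}-\widehat{\widetilde f}s)+g\widehat{\widetilde h}-s\widehat{\widetilde g}-f\widehat{\widetilde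 \mu}+\nu\widehat{\widetilde f}=0.$$
   Context: Fix $\alpha_1,\alpha_2,\alpha_3\in\mathbb C$ and put $G(\omega,k)=\omega^4-k^4+\alpha_3(\omega^3-k^3)+\alpha_2(\omega^2-k^2)+\alpha_1(\omega-k)$ and $H(p,q)=p^2+pq+q^2-\alpha_3(p+q)+\alpha_2$. Let $p,q,a,b\in\mathbb C$ be pairwise distinct parameters. Fix $N\ge1$ and $k_1,\dots,k_N\in\mathbb C$; for each $s$ let $\omega_1(k_s),\dots,\omega_4(k_s)$ be the four roots in $\omega$ of $G(-\omega,-k_s)=0$, i.e. of $\omega^4-\alpha_3\omega^3+\alpha_2\omega^2-\alpha_1\omega=k_s^4-\alpha_3k_s^3+\alpha_2k_s^2-\alpha_1k_s$, with $\omega_4(k_s)=k_s$. For arbitrary constants $\rho^{(0)}_{j,s}\in\mathbb C$ define, for $(n,m,\alpha,\beta,l)\in\mathbb Z^5$, $\psi_s(n,m,\alpha,\beta,l)=\sum_{j=1}^4\rho^{(0)}_{j,s}(-\omega_j(k_s))^l(p-\omega_j(k_s))^n(q-\omega_j(k_s))^m(a-\omega_j(k_s))^\alpha(b-\omega_j(k_s))^\beta$, and $\boldsymbol\psi(l)=(\psi_1,\dots,\psi_N)^T$ (dependence on $n,m,\alpha,\beta$ suppressed). Casoratian notation: $|l_1,\dots,l_N|=\det(\boldsymbol\psi(l_1),\dots,\boldsymbol\psi(l_N))$; a run "$0,\dots,j$" with $j<0$ is empty, and if the listed indices number more than $N$ (possible only for small $N$) the symbol is defined to be $0$. Shift notation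 for a function $F(n,m)$: $\widetilde F=F(n+1,m)$, $\widehat F=F(n,m+1)$, $\widehat{\widetilde F}=F(n+1,m+1)$. *)

theory Defs
  imports Complex_Main "Jordan_Normal_Form.Determinant"
begin

definition G4 :: "complex \<Rightarrow> complex \<Rightarrow> complex \<Rightarrow> complex \<Rightarrow> complex \<Rightarrow> complex" where
  "G4 \<alpha>1 \<alpha>2 \<alpha>3 w k = w^4 - k^4 + \<alpha>3 * (w^3 - k^3) + \<alpha>2 * (w^2 - k^2) + \<alpha>1 * (w - k)"

definition H2 :: "complex \<Rightarrow> complex \<Rightarrow> complex \<Rightarrow> complex \<Rightarrow> complex" where
  "H2 \<alpha>2 \<alpha>3 p q = p^2 + p*q + q^2 - \<alpha>3 * (p + q) + \<alpha>2"

definition psi :: "(nat \<Rightarrow> nat \<Rightarrow> complex) \<Rightarrow> (nat \<Rightarrow> nat \<Rightarrow> complex) \<Rightarrow>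
    complex \<Rightarrow> complex \<Rightarrow> complex \<Rightarrow> complex \<Rightarrow> nat \<Rightarrow> int \<Rightarrow> int \<Rightarrow> int \<Rightarrow> int \<Rightarrow> int \<Rightarrow> complex" where
  "psi \<omega> \<rho> p q a b s n m al be l =
     (\<Sum>j=1..4. \<rho> j s * (- \<omega> j s) powi l * (p - \<omega> j s) powi n * (q - \<omega> j s) powi m
                 * (a - \<omega> j s) powi al * (b - \<omega> j s) powi be)"

text \<open>Casoratian |l_1,...,l_L|: determinant of the N x N matrix whose j-th column is psi(l_j),
  row i being psi_(i+1); defined to be 0 if the number of listed indices differs from N
  (in all uses below it is never smaller than N).\<close>
definition casoratian :: "(nat \<Rightarrow> nat \<Rightarrow> complex) \<Rightarrow> (nat \<Rightarrow> nat \<Rightarrow> complex) \<Rightarrow>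
    complex \<Rightarrow> complex \<Rightarrow> complex \<Rightarrow> complex \<Rightarrow> nat \<Rightarrow> int \<Rightarrow> int \<Rightarrow> int \<Rightarrow> int \<Rightarrow> int list \<Rightarrow> complex" where
  "casoratian \<omega> \<rho> p q a b N n m al be L =
     (if length L = N
      then det (mat N N (\<lambda>(i, j). psi \<omega> \<rho> p q a b (Suc i) n m al be (L ! j)))
      else 0)"

end

theory Submission
  imports Defs
begin

(* Shifting n (resp. m) replaces each column psi(l) of a Casoratian by p psi(l) + psi(l+1)
   (resp. q psi(l) + psi(l+1)), and the quartic dispersion relation expresses c_s psi_s(l)
   through psi_s(l+1), ..., psi_s(l+4).  Every bilinear equation is then a Pluecker-type
   relation: expanding an (N+1) x (N+1) determinant with a repeated row gives
   sum_k (-1)^k |B without B_k| phi(B_k) = 0 for any N+1 columns B and any linear functional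
   phi.  Taking for B the shifted columns and for phi a determinant with N-1 fixed unshifted
   columns, all but the last three or four terms vanish.  For the equations involving both
   shifts, the remaining sum is evaluated by expanding the q-shifted Casoratian as
   sum_k q^k |u without u_k| and observing that |u'_0, ..., u'_(N-2), u_k| is geometric in k
   for k < N when u' is a shift of u. *)

section \<open>Determinants of lists of columns\<close>

definition coldet :: "nat \<Rightarrow> (nat \<Rightarrow> 'a::comm_ring_1) list \<Rightarrow> 'a" where
  "coldet N cs = (if length cs = N then det (mat N N (\<lambda>(i, j). (cs ! j) i)) else 0)"

lemma coldet_length_neq: "length cs \<noteq> N \<Longrightarrow> coldet N cs = 0"
  by (simp add: coldet_def)

lemma coldet_linear_form: "\<exists>K. \<forall>z. coldet N (A @ z # B) = (\<Sum>i<N. z i * K i)"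
proof (cases "Suc (length A + length B) = N")
  case False
  then show ?thesis by (intro exI[of _ "\<lambda>_. 0"]) (simp add: coldet_def)
next
  case True
  define k where "k = length A"
  have kN: "k < N" using True k_def by simp
  define M where "M z = mat N N (\<lambda>(i, j). ((A @ z # B) ! j) i)" for z
  have minor_indep: "mat_delete (M z) i k = mat_delete (M z') i k" for z z' i
  proof -
    have "M z $$ (if i' < i then i' else Suc i', if j' < k then j' else Suc j')
        = M z' $$ (if i' < i then i' else Suc i', if j' < k then j' else Suc j')"
      if "i' < N - 1" "j' < N - 1" for i' j'
    proof -
      let ?j = "if j' < k then j' else Suc j'"
      have "(A @ z # B) ! ?j = (A @ z' # B) ! ?j"
        by (auto simp: k_def nth_append nth_Cons split: nat.splits)
      then show ?thesis unfolding M_def using that by (auto split: if_splits)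
    qed
    then show ?thesis unfolding mat_delete_def by (auto simp: M_def)
  qed
  then have cofactor_indep: "cofactor (M z') i k = cofactor (M z) i k" for z' i
    unfolding cofactor_def by (simp only: minor_indep[of z' i z])
  have column_k: "M z' $$ (i, k) = z' i" if "i < N" for z' i
    using that kN by (simp add: M_def k_def nth_append)
  show ?thesis
  proof (intro exI allI)
    fix z'
    have "coldet N (A @ z' # B) = det (M z')" using True by (simp add: coldet_def M_def)
    also have "\<dots> = (\<Sum>i<N. M z' $$ (i, k) * cofactor (M z') i k)"
      by (rule laplace_expansion_column) (auto simp: M_def kN)
    also have "\<dots> = (\<Sum>i<N. z' i * cofactor (M z) i k)"
      by (intro sum.cong refl) (simp add: column_k cofactor_indep[of z'])
    finally show "coldet N (A @ z' # B) = (\<Sum>i<N. z' i * cofactor (M z) i k)" .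
  qed
qed

lemma coldet_lincomb:
  "coldet N (A @ (\<lambda>i. a * x i + b * y i) # B) = a * coldet N (A @ x # B) + b * coldet N (A @ y # B)"
proof -
  obtain K where K: "\<And>z. coldet N (A @ z # B) = (\<Sum>i<N. z i * K i)"
    using coldet_linear_form by blast
  show ?thesis unfolding K by (simp add: sum.distrib sum_distrib_left algebra_simps)
qed

lemma coldet_add: "coldet N (A @ (\<lambda>i. x i + y i) # B) = coldet N (A @ x # B) + coldet N (A @ y # B)"
  using coldet_lincomb[of N A 1 x 1 y B] by simp

lemma coldet_smult_add:
  "coldet N (A @ (\<lambda>i. a * x i + y i) # B) = a * coldet N (A @ x # B) + coldet N (A @ y # B)"
  using coldet_lincomb[of N A a x 1 y B] by simp

lemma coldet_not_distinct:
  assumes "\<not> distinct cs"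
  shows "coldet N cs = 0"
proof (cases "length cs = N")
  case True
  from assms obtain a b where "a < length cs" "b < length cs" "a \<noteq> b" "cs ! a = cs ! b"
    by (auto simp: distinct_conv_nth)
  then have "det (mat N N (\<lambda>(i, j). (cs ! j) i)) = 0"
    using True by (intro det_identical_columns[of _ N a b]) auto
  then show ?thesis using True by (simp add: coldet_def)
qed (simp add: coldet_def)

lemma coldet_swap: "coldet N (A @ x # y # B) = - coldet N (A @ y # x # B)"
proof -
  let ?s = "\<lambda>i. x i + y i"
  have "0 = coldet N (A @ ?s # ?s # B)" by (simp add: coldet_not_distinct)
  also have "\<dots> = coldet N ((A @ [x]) @ ?s # B) + coldet N ((A @ [y]) @ ?s # B)"
    using coldet_add[of N A x y "?s # B"] by simp
  also have "\<dots> = coldet N (A @ x # y # B) + coldet N (A @ y # x # B)"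
    by (simp only: coldet_add) (simp add: coldet_not_distinct)
  finally show ?thesis by (simp add: eq_neg_iff_add_eq_0)
qed

lemma coldet_rotate: "coldet N (A @ x # L) = (-1) ^ length L * coldet N (A @ L @ [x])"
proof (induction L arbitrary: A)
  case (Cons y L)
  have "coldet N (A @ x # y # L) = - coldet N ((A @ [y]) @ x # L)"
    using coldet_swap[of N A x y L] by simp
  also have "\<dots> = - ((-1) ^ length L * coldet N ((A @ [y]) @ L @ [x]))"
    by (simp only: Cons.IH)
  finally show ?case by simp
qed simp

lemma coldet_plucker:
  fixes B :: "(nat \<Rightarrow> 'a::comm_ring_1) list"
  assumes len: "length B = Suc N" and \<phi>: "\<And>z. \<phi> z = (\<Sum>i<N. z i * K i)"
  shows "(\<Sum>k<Suc N. (-1) ^ k * coldet N (take k B @ drop (Suc k) B) * \<phi> (B ! k)) = 0"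
proof -
  have component: "(\<Sum>k<Suc N. (-1) ^ k * coldet N (take k B @ drop (Suc k) B) * (B ! k) i) = 0"
    if i: "i < N" for i
  proof -
    \<comment> \<open>Expand along the top row a matrix whose top row repeats row i of the columns B.\<close>
    define M where "M = (mat (Suc N) (Suc N) (\<lambda>(r, j). (B ! j) (if r = 0 then i else r - 1)) :: 'a mat)"
    have M: "M \<in> carrier_mat (Suc N) (Suc N)" by (simp add: M_def)
    have minor: "cofactor M 0 j = (-1) ^ j * coldet N (take j B @ drop (Suc j) B)" if "j < Suc N" for j
    proof -
      have "mat_delete M 0 j = mat N N (\<lambda>(r, c). ((take j B @ drop (Suc j) B) ! c) r)"
        unfolding mat_delete_def M_def by (rule eq_matI) (use that len in \<open>auto simp: nth_append min_def\<close>)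
      moreover have "length (take j B @ drop (Suc j) B) = N" using that len by auto
      ultimately show ?thesis unfolding cofactor_def coldet_def by simp
    qed
    have top_row: "M $$ (0, j) = (B ! j) i" if "j < Suc N" for j
      using that by (simp add: M_def)
    have "0 = det M"
      by (rule det_identical_rows[OF M, of 0 "Suc i", symmetric]) (use i in \<open>auto simp: M_def\<close>)
    also have "\<dots> = (\<Sum>j<Suc N. M $$ (0, j) * cofactor M 0 j)"
      by (rule laplace_expansion_row[OF M]) simp
    also have "\<dots> = (\<Sum>k<Suc N. (-1) ^ k * coldet N (take k B @ drop (Suc k) B) * (B ! k) i)"
      by (intro sum.cong refl) (simp add: minor top_row)
    finally show ?thesis by simp
  qed
  have "(\<Sum>k<Suc N. (-1) ^ k * coldet N (take k B @ drop (Suc k) B) * \<phi> (B ! k))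
      = (\<Sum>i<N. K i * (\<Sum>k<Suc N. (-1) ^ k * coldet N (take k B @ drop (Suc k) B) * (B ! k) i))"
    unfolding \<phi> by (simp add: sum_distrib_left sum_distrib_right sum.swap[of _ "{..<N}"] algebra_simps)
  also have "\<dots> = 0" by (simp add: component del: sum.lessThan_Suc)
  finally show ?thesis .
qed

lemma coldet_plucker_map:
  assumes "length L = Suc N" and "\<And>z. \<phi> z = (\<Sum>i<N. z i * K i)"
  shows "(\<Sum>k<Suc N. (-1) ^ k * coldet N (map x (take k L @ drop (Suc k) L)) * \<phi> (x (L ! k))) = 0"
  using coldet_plucker[of "map x L" N \<phi> K] assms by (simp add: take_map drop_map)

lemma coldet_plucker_upt:
  assumes "\<And>z. \<phi> z = (\<Sum>i<N. z i * K i)"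
  shows "(\<Sum>k<Suc N. (-1) ^ k * coldet N (map x ([0..<k] @ [Suc k..<Suc N])) * \<phi> (x k)) = 0"
proof -
  have "take k [0..<Suc N] @ drop (Suc k) [0..<Suc N] = [0..<k] @ [Suc k..<Suc N]" if "k < Suc N" for k
    using that by simp
  then show ?thesis
    using coldet_plucker_map[of "[0..<Suc N]" N \<phi> K x] assms by (simp del: upt_Suc)
qed

lemma coldet_plucker_append:
  assumes "length L = Suc N"
  shows "(\<Sum>k<Suc N. (-1) ^ k * coldet N (map x (take k L @ drop (Suc k) L)) * coldet N (P @ [x (L ! k)])) = 0"
proof -
  obtain K where "\<And>z. coldet N (P @ [z]) = (\<Sum>i<N. z i * K i)"
    using coldet_linear_form by blast
  with assms show ?thesis by (rule coldet_plucker_map)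
qed

lemma coldet_plucker_upt_append:
  "(\<Sum>k<Suc N. (-1) ^ k * coldet N (map x ([0..<k] @ [Suc k..<Suc N])) * coldet N (P @ [x k])) = 0"
proof -
  obtain K where "\<And>z. coldet N (P @ [z]) = (\<Sum>i<N. z i * K i)"
    using coldet_linear_form by blast
  then show ?thesis by (rule coldet_plucker_upt)
qed

definition col_shift :: "'a \<Rightarrow> (nat \<Rightarrow> nat \<Rightarrow> 'a) \<Rightarrow> nat \<Rightarrow> nat \<Rightarrow> 'a::comm_ring_1" where
  "col_shift c x l = (\<lambda>i. c * x l i + x (Suc l) i)"

lemma coldet_col_shift:
  "coldet N (A @ col_shift c x l # B) = c * coldet N (A @ x l # B) + coldet N (A @ x (Suc l) # B)"
  unfolding col_shift_def by (rule coldet_smult_add)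

lemma coldet_col_shift_expand:
  "coldet N (map (col_shift c x) [0..<K] @ R)
     = (\<Sum>k\<le>K. c ^ k * coldet N (map x ([0..<k] @ [Suc k..<Suc K]) @ R))"
proof (induction K arbitrary: R)
  case (Suc K)
  have "coldet N (map (col_shift c x) [0..<Suc K] @ R)
      = c * coldet N (map (col_shift c x) [0..<K] @ x K # R)
        + coldet N (map (col_shift c x) [0..<K] @ x (Suc K) # R)"
    by (simp add: coldet_col_shift)
  also have "coldet N (map (col_shift c x) [0..<K] @ x K # R) = c ^ K * coldet N (map x [0..<Suc K] @ R)"
  proof -
    have "coldet N (map x ([0..<k] @ [Suc k..<Suc K]) @ x K # R) = 0" if "k < K" for k
      using that by (intro coldet_not_distinct) simp
    then show ?thesis
      by (simp add: Suc.IH lessThan_Suc_atMost[symmetric] del: upt_Suc) simp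
  qed
  also have "coldet N (map (col_shift c x) [0..<K] @ x (Suc K) # R)
      = (\<Sum>k\<le>K. c ^ k * coldet N (map x ([0..<k] @ [Suc k..<Suc (Suc K)]) @ R))"
    using Suc.IH[of "x (Suc K) # R"] by simp
  finally show ?case by (simp add: algebra_simps)
qed simp

lemma coldet_col_shift_triangular:
  "coldet N (map x [0..<Suc K] @ R) = coldet N (x 0 # map (col_shift c x) [0..<K] @ R)"
proof (induction K arbitrary: R)
  case (Suc K)
  \<comment> \<open>Adding c times the column x K (already present) to the column x (Suc K).\<close>
  have "coldet N (map x [0..<Suc K] @ col_shift c x K # R)
      = c * coldet N (map x [0..<Suc K] @ x K # R) + coldet N (map x [0..<Suc K] @ x (Suc K) # R)"
    by (rule coldet_col_shift)
  also have "coldet N (map x [0..<Suc K] @ x K # R) = 0"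
    by (rule coldet_not_distinct) simp
  finally have "coldet N (map x [0..<Suc (Suc K)] @ R) = coldet N (map x [0..<Suc K] @ col_shift c x K # R)"
    by simp
  also have "\<dots> = coldet N (x 0 # map (col_shift c x) [0..<Suc K] @ R)"
    using Suc.IH[of "col_shift c x K # R"] by simp
  finally show ?case .
qed simp

lemma geometric_if_shift_vanishes:
  fixes a :: "nat \<Rightarrow> 'a::comm_ring_1"
  assumes "\<And>k. k < M \<Longrightarrow> c * a k + a (Suc k) = 0" and "k \<le> M"
  shows "a k = (-c) ^ k * a 0"
  using assms(2)
proof (induction k)
  case (Suc k)
  then have "a (Suc k) = - (c * a k)" using assms(1)[of k] by (simp add: eq_neg_iff_add_eq_0 add.commute)
  then show ?case using Suc by simp
qed simp

lemma coldet_alternating_pairing: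
  fixes u x :: "nat \<Rightarrow> nat \<Rightarrow> 'a::comm_ring_1"
  assumes N: "N = Suc M"
  shows "(\<Sum>k<Suc N. (-1) ^ k * coldet N (map x ([0..<k] @ [Suc k..<Suc N]))
                      * coldet N (map (col_shift c u) [0..<M] @ [u k]))
       = (-1) ^ M * (coldet N (map u [0..<N]) * coldet N (map (col_shift c x) [0..<N])
                     - coldet N (map x [0..<N]) * coldet N (map (col_shift c u) [0..<N]))"
proof -
  define a where "a k = coldet N (map (col_shift c u) [0..<M] @ [u k])" for k
  define d where "d k = coldet N (map x ([0..<k] @ [Suc k..<Suc N]))" for k
  let ?u' = "coldet N (map (col_shift c u) [0..<N])"
  have a_shift: "c * a k + a (Suc k) = coldet N (map (col_shift c u) [0..<M] @ [col_shift c u k])" for k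
    by (simp add: a_def coldet_col_shift)
  have a_geom: "a k = (-c) ^ k * a 0" if "k \<le> M" for k
    using _ that by (rule geometric_if_shift_vanishes) (simp add: a_shift coldet_not_distinct)
  have a_N: "a N = ?u' + (-c) ^ N * a 0"
    using a_shift[of M] a_geom[of M] N by (simp add: algebra_simps)
  have sign: "(-1) ^ k * ((-c) ^ k * z) = c ^ k * z" for k z
    by (simp add: mult.assoc[symmetric] flip: power_mult_distrib)
  have a_k: "(-1) ^ k * a k = c ^ k * a 0 + (if k = N then (-1) ^ N * ?u' else 0)" if "k < Suc N" for k
  proof (cases "k = N")
    case False
    then show ?thesis using that N a_geom[of k] by (simp add: sign)
  qed (simp add: a_N distrib_left sign)
  have "coldet N (map u [0..<Suc M] @ []) = coldet N ([] @ u 0 # map (col_shift c u) [0..<M])"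
    by (subst coldet_col_shift_triangular[where c = c]) simp
  also have "\<dots> = (-1) ^ M * a 0"
    by (subst coldet_rotate) (simp add: a_def)
  finally have a_0: "a 0 = (-1) ^ M * coldet N (map u [0..<N])"
    using N by simp
  have "(\<Sum>k<Suc N. (-1) ^ k * d k * a k)
      = (\<Sum>k<Suc N. a 0 * (c ^ k * d k) + (if k = N then (-1) ^ N * d N * ?u' else 0))"
  proof (intro sum.cong refl)
    fix k assume "k \<in> {..<Suc N}"
    have "(-1) ^ k * d k * a k = d k * ((-1) ^ k * a k)"
      by (simp only: mult_ac)
    also have "\<dots> = d k * (c ^ k * a 0 + (if k = N then (-1) ^ N * ?u' else 0))"
      using a_k \<open>k \<in> {..<Suc N}\<close> by simp
    finally show "(-1) ^ k * d k * a k = a 0 * (c ^ k * d k) + (if k = N then (-1) ^ N * d N * ?u' else 0)"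
      by (simp add: algebra_simps)
  qed
  also have "\<dots> = a 0 * coldet N (map (col_shift c x) [0..<N]) + (-1) ^ N * d N * ?u'"
    using coldet_col_shift_expand[of N c x N "[]"]
    by (simp add: sum.distrib sum_distrib_left d_def lessThan_Suc_atMost del: sum.lessThan_Suc)
  finally have "(\<Sum>k<Suc N. (-1) ^ k * d k * a k)
      = a 0 * coldet N (map (col_shift c x) [0..<N]) + (-1) ^ N * d N * ?u'" .
  moreover have "d N = coldet N (map x [0..<N])" by (simp add: d_def)
  moreover have "(-1) ^ N = - ((-1) ^ M :: 'a)" using N by simp
  ultimately show ?thesis
    unfolding a_def[symmetric] d_def[symmetric] by (simp add: a_0 algebra_simps)
qed

section \<open>Bilinear identities for shifted families of columns\<close>

lemma minus_one_power_mult_eq_0_iff: "(-1) ^ n * x = 0 \<longleftrightarrow> x = (0::'a::comm_ring_1)"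
  by (metis left_minus_one_mult_self mult_zero_right)

(* The paper's f, g, h, s, mu, theta, nu for a family u of columns.  For small N some index
   lists have the wrong length and the value is 0, as in the paper's convention. *)
definition cas_f :: "nat \<Rightarrow> (nat \<Rightarrow> nat \<Rightarrow> 'a::comm_ring_1) \<Rightarrow> 'a" where
  "cas_f N u = coldet N (map u [0..<N])"

definition cas_g :: "nat \<Rightarrow> (nat \<Rightarrow> nat \<Rightarrow> 'a::comm_ring_1) \<Rightarrow> 'a" where
  "cas_g N u = coldet N (map u ([0..<N - 1] @ [N]))"

definition cas_h :: "nat \<Rightarrow> (nat \<Rightarrow> nat \<Rightarrow> 'a::comm_ring_1) \<Rightarrow> 'a" where
  "cas_h N u = coldet N (map u ([0..<N - 1] @ [N + 1]))"

definition cas_s :: "nat \<Rightarrow> (nat \<Rightarrow> nat \<Rightarrow> 'a::comm_ring_1) \<Rightarrow> 'a" where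
  "cas_s N u = coldet N (map u ([0..<N - 2] @ [N - 1, N]))"

definition cas_mu :: "nat \<Rightarrow> (nat \<Rightarrow> nat \<Rightarrow> 'a::comm_ring_1) \<Rightarrow> 'a" where
  "cas_mu N u = coldet N (map u ([0..<N - 1] @ [N + 2]))"

definition cas_theta :: "nat \<Rightarrow> (nat \<Rightarrow> nat \<Rightarrow> 'a::comm_ring_1) \<Rightarrow> 'a" where
  "cas_theta N u = coldet N (map u ([0..<N - 2] @ [N - 1, N + 1]))"

definition cas_nu :: "nat \<Rightarrow> (nat \<Rightarrow> nat \<Rightarrow> 'a::comm_ring_1) \<Rightarrow> 'a" where
  "cas_nu N u = coldet N (map u ([0..<N - 3] @ [N - 2, N - 1, N]))"

lemma bilinear_f_g_h_s:
  assumes N: "1 \<le> N" and t: "t = col_shift p u"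
  shows "cas_f N t * (p * cas_g N u + cas_h N u) - cas_g N t * (p * cas_f N u + cas_g N u)
         + cas_f N u * cas_s N t = 0"
proof -
  define P where "P = map u [0..<N - 1]"
  define F where "F k = (-1) ^ k * coldet N (map t ([0..<k] @ [Suc k..<Suc N])) * coldet N (P @ [t k])" for k
  have plucker: "(\<Sum>k<Suc N. F k) = 0"
    unfolding F_def by (rule coldet_plucker_upt_append)
  have t_col: "coldet N (A @ [t k]) = p * coldet N (A @ [u k]) + coldet N (A @ [u (Suc k)])" for A k
    unfolding t by (rule coldet_col_shift)
  have P_dup: "coldet N (P @ [u j]) = 0" if "j < N - 1" for j
    using that by (intro coldet_not_distinct) (simp add: P_def)
  consider "N = 1" | M where "N = Suc (Suc M)"
    using N by (cases N; cases "N - 1") auto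
  then show ?thesis
  proof cases
    case 1
    then have "F 0 + F 1 = 0" using plucker by (simp add: numeral_2_eq_2)
    then show ?thesis
      using 1 t_col[where A = "[]"] by (simp add: F_def P_def t_col cas_f_def cas_g_def cas_h_def cas_s_def
          coldet_length_neq algebra_simps)
  next
    case 2
    have "F k = 0" if "k < M" for k
    proof -
      have "Suc k < N - 1" using that 2 by simp
      then show ?thesis by (simp add: F_def t_col P_dup)
    qed
    then have "F M + F (Suc M) + F (Suc (Suc M)) = 0"
      using plucker 2 by simp
    moreover have "F M + F (Suc M) + F (Suc (Suc M)) = (-1) ^ M * (cas_f N t * (p * cas_g N u + cas_h N u)
        - cas_g N t * (p * cas_f N u + cas_g N u) + cas_f N u * cas_s N t)"
      unfolding F_def t_col P_def using 2
      by (simp add: cas_f_def cas_g_def cas_h_def cas_s_def coldet_not_distinct algebra_simps)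
    ultimately show ?thesis by (simp add: minus_one_power_mult_eq_0_iff)
  qed
qed

lemma bilinear_f_h_mu_theta:
  assumes N: "1 \<le> N" and t: "t = col_shift p u"
  shows "cas_f N t * (p * cas_h N u + cas_mu N u) - cas_h N t * (p * cas_f N u + cas_g N u)
         + cas_f N u * cas_theta N t = 0"
proof -
  define P where "P = map u [0..<N - 1]"
  define L where "L = [0..<N] @ [Suc N]"
  define F where "F k = (-1) ^ k * coldet N (map t (take k L @ drop (Suc k) L)) * coldet N (P @ [t (L ! k)])" for k
  have plucker: "(\<Sum>k<Suc N. F k) = 0"
    unfolding F_def by (rule coldet_plucker_append) (simp add: L_def)
  have t_col: "coldet N (A @ [t k]) = p * coldet N (A @ [u k]) + coldet N (A @ [u (Suc k)])" for A k
    unfolding t by (rule coldet_col_shift)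
  have P_dup: "coldet N (P @ [u j]) = 0" if "j < N - 1" for j
    using that by (intro coldet_not_distinct) (simp add: P_def)
  consider "N = 1" | M where "N = Suc (Suc M)"
    using N by (cases N; cases "N - 1") auto
  then show ?thesis
  proof cases
    case 1
    then have "F 0 + F 1 = 0" using plucker by (simp add: numeral_2_eq_2)
    then show ?thesis
      using 1 t_col[where A = "[]"] by (simp add: F_def P_def L_def t_col cas_f_def cas_g_def cas_h_def
          cas_mu_def cas_theta_def coldet_length_neq algebra_simps)
  next
    case 2
    have "F k = 0" if "k < M" for k
    proof -
      have "Suc k < N - 1" "L ! k = k" using that 2 by (simp_all add: L_def nth_append)
      then show ?thesis by (simp add: F_def t_col P_dup)
    qed
    then have "F M + F (Suc M) + F (Suc (Suc M)) = 0"
      using plucker 2 by simp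
    moreover have "F M + F (Suc M) + F (Suc (Suc M)) = (-1) ^ M * (cas_f N t * (p * cas_h N u + cas_mu N u)
        - cas_h N t * (p * cas_f N u + cas_g N u) + cas_f N u * cas_theta N t)"
      unfolding F_def t_col P_def L_def using 2
      by (simp add: cas_f_def cas_g_def cas_h_def cas_mu_def cas_theta_def coldet_not_distinct
          nth_append algebra_simps)
    ultimately show ?thesis by (simp add: minus_one_power_mult_eq_0_iff)
  qed
qed

lemma bilinear_f_s_theta_nu:
  assumes N: "1 \<le> N" and t: "t = col_shift p u"
  shows "cas_f N t * (p * cas_s N u + cas_theta N u) - cas_f N u * (p * cas_s N t - cas_nu N t)
         - cas_g N t * cas_s N u = 0"
proof -
  define P where "P = map u ([0..<N - 2] @ [N - 1])"
  define F where "F k = (-1) ^ k * coldet N (map t ([0..<k] @ [Suc k..<Suc N])) * coldet N (P @ [t k])" for k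
  have plucker: "(\<Sum>k<Suc N. F k) = 0"
    unfolding F_def by (rule coldet_plucker_upt_append)
  have t_col: "coldet N (A @ [t k]) = p * coldet N (A @ [u k]) + coldet N (A @ [u (Suc k)])" for A k
    unfolding t by (rule coldet_col_shift)
  have P_dup: "coldet N (P @ [u j]) = 0" if "j < N - 2" for j
    using that by (intro coldet_not_distinct) (simp add: P_def)
  consider "N = 1" | "N = 2" | M where "N = Suc (Suc (Suc M))"
    using N by (cases N; cases "N - 1"; cases "N - 2") auto
  then show ?thesis
  proof cases
    case 1
    then show ?thesis
      by (simp add: cas_s_def cas_theta_def cas_nu_def coldet_length_neq)
  next
    case 2
    then have "F 0 + F 1 + F 2 = 0" using plucker by (simp add: numeral_2_eq_2 numeral_3_eq_3)
    moreover have "F 0 + F 1 + F 2 = cas_f N t * (p * cas_s N u + cas_theta N u)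
        - cas_f N u * (p * cas_s N t - cas_nu N t) - cas_g N t * cas_s N u"
      unfolding F_def t_col P_def using 2
      by (simp add: cas_f_def cas_g_def cas_s_def cas_theta_def cas_nu_def coldet_not_distinct
          coldet_length_neq numeral_2_eq_2 coldet_swap[of _ "[]" "u (Suc 0)" "u 0" "[]", simplified]
          algebra_simps)
    ultimately show ?thesis by simp
  next
    case 3
    have "F k = 0" if "k < M" for k
    proof -
      have "Suc k < N - 2" using that 3 by simp
      then show ?thesis by (simp add: F_def t_col P_dup)
    qed
    then have "F M + F (Suc M) + F (Suc (Suc M)) + F (Suc (Suc (Suc M))) = 0"
      using plucker 3 by simp
    moreover have "F M + F (Suc M) + F (Suc (Suc M)) + F (Suc (Suc (Suc M)))
        = (-1) ^ Suc M * (cas_f N t * (p * cas_s N u + cas_theta N u)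
          - cas_f N u * (p * cas_s N t - cas_nu N t) - cas_g N t * cas_s N u)"
      unfolding F_def t_col P_def using 3
      by (simp add: cas_f_def cas_g_def cas_s_def cas_theta_def cas_nu_def coldet_not_distinct
          coldet_swap[of _ "map u [0..<M] @ [u M]" "u (Suc (Suc M))" "u (Suc M)" "[]", simplified]
          algebra_simps)
    ultimately show ?thesis by (simp only: minus_one_power_mult_eq_0_iff)
  qed
qed

lemma bilinear_f_g_two_shifts:
  assumes N: "1 \<le> N" and t: "t = col_shift p u" and r: "r = col_shift q u" and v: "v = col_shift p r"
  shows "(p - q) * (cas_f N t * cas_f N r - cas_f N u * cas_f N v)
         + cas_f N t * cas_g N r - cas_f N r * cas_g N t = 0"
proof -
  obtain M where M: "N = Suc M" using N by (cases N) auto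
  define T where "T = map t [0..<M]"
  define d where "d k = coldet N (map r ([0..<k] @ [Suc k..<Suc N]))" for k
  have plucker: "(\<Sum>k<Suc N. (-1) ^ k * d k * coldet N (T @ [r k])) = 0"
    unfolding d_def by (rule coldet_plucker_upt_append)
  have "r k = (\<lambda>i. (q - p) * u k i + t k i)" for k
    unfolding r t col_shift_def by (simp add: algebra_simps)
  then have r_col: "coldet N (T @ [r k]) = (q - p) * coldet N (T @ [u k]) + coldet N (T @ [t k])" for k
    by (simp add: coldet_smult_add)
  have u_terms: "(\<Sum>k<Suc N. (-1) ^ k * d k * coldet N (T @ [u k]))
      = (-1) ^ M * (cas_f N u * cas_f N v - cas_f N r * cas_f N t)"
    using coldet_alternating_pairing[OF M, of r p u] by (simp add: T_def d_def t v cas_f_def)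
  have "(-1) ^ k * d k * coldet N (T @ [t k]) = 0" if "k < M" for k
    using that by (simp add: T_def coldet_not_distinct)
  then have t_terms: "(\<Sum>k<Suc N. (-1) ^ k * d k * coldet N (T @ [t k]))
      = (-1) ^ M * (cas_g N r * cas_f N t - cas_f N r * cas_g N t)"
    by (simp add: M T_def d_def cas_f_def cas_g_def algebra_simps)
  have "(-1) ^ k * d k * coldet N (T @ [r k])
      = (q - p) * ((-1) ^ k * d k * coldet N (T @ [u k])) + (-1) ^ k * d k * coldet N (T @ [t k])" for k
    by (simp add: r_col algebra_simps)
  then have "0 = (q - p) * (\<Sum>k<Suc N. (-1) ^ k * d k * coldet N (T @ [u k]))
            + (\<Sum>k<Suc N. (-1) ^ k * d k * coldet N (T @ [t k]))"
    using plucker by (simp add: sum.distrib sum_distrib_left del: sum.lessThan_Suc)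
  also have "\<dots> = (-1) ^ M * ((p - q) * (cas_f N t * cas_f N r - cas_f N u * cas_f N v)
      + cas_f N t * cas_g N r - cas_f N r * cas_g N t)"
    unfolding u_terms t_terms by (simp add: algebra_simps)
  finally show ?thesis by (simp add: minus_one_power_mult_eq_0_iff)
qed

lemma alternating_minor_sum_tail:
  fixes u :: "nat \<Rightarrow> nat \<Rightarrow> 'a::comm_ring_1" and w :: "nat \<Rightarrow> 'a"
  assumes N: "N = Suc M" and w: "\<And>j. j < M \<Longrightarrow> w j = 0"
  shows "(-1) ^ N * (\<Sum>k<Suc N. (-1) ^ k * coldet N (map u ([0..<k] @ [Suc k..<Suc N]))
                                  * (w (k + 2) - h * w (k + 1) + H * w k))
       = cas_f N u * (w (N + 2) - h * w (N + 1) + H * w N)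
         - cas_g N u * (w (N + 1) - h * w N + H * w M)
         + cas_s N u * (w N - h * w M) - cas_nu N u * w M"
proof -
  define F where "F k = (-1) ^ k * coldet N (map u ([0..<k] @ [Suc k..<Suc N]))
                        * (w (k + 2) - h * w (k + 1) + H * w k)" for k
  consider "M = 0" | "M = 1" | M' where "M = Suc (Suc M')"
    by (cases M; cases "M - 1") auto
  then have "(-1) ^ N * (\<Sum>k<Suc N. F k) = cas_f N u * (w (N + 2) - h * w (N + 1) + H * w N)
         - cas_g N u * (w (N + 1) - h * w N + H * w M)
         + cas_s N u * (w N - h * w M) - cas_nu N u * w M"
  proof cases
    case 1
    then show ?thesis
      using N by (simp add: F_def cas_f_def cas_g_def cas_s_def cas_nu_def coldet_length_neq algebra_simps)
  next
    case 2
    then show ?thesis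
      using N w[of 0] by (simp add: F_def cas_f_def cas_g_def cas_s_def cas_nu_def coldet_length_neq
          numeral_eq_Suc algebra_simps)
  next
    case 3
    have "F k = 0" if "k < M'" for k
      using that 3 w[of k] w[of "k + 1"] w[of "k + 2"] by (simp add: F_def)
    then have "(\<Sum>k<Suc N. F k) = F M' + F (Suc M') + F (Suc (Suc M')) + F (Suc (Suc (Suc M')))"
      using N 3 by simp
    then show ?thesis
      using N 3 w[of M'] w[of "Suc M'"] by (simp add: F_def cas_f_def cas_g_def cas_s_def cas_nu_def
          numeral_eq_Suc algebra_simps)
  qed
  then show ?thesis by (simp add: F_def)
qed

lemma G4_div_diff:
  assumes "p \<noteq> q"
  shows "G4 \<alpha>1 \<alpha>2 \<alpha>3 (-p) (-q) / (p - q)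
       = p^3 + p^2*q + p*q^2 + q^3 - \<alpha>3 * (p^2 + p*q + q^2) + \<alpha>2 * (p + q) - \<alpha>1"
proof -
  have "p - q \<noteq> 0" using assms by simp
  then show ?thesis
    unfolding G4_def by (simp add: field_simps) (simp add: algebra_simps power2_eq_square power3_eq_cube power4_eq_xxxx)
qed

lemma dispersion_col_shift:
  fixes u :: "nat \<Rightarrow> nat \<Rightarrow> complex"
  assumes pq: "p \<noteq> q" and t: "t = col_shift p u" and v: "v = col_shift q t"
    and disp: "\<And>k. (\<lambda>i. c i * u k i)
                 = (\<lambda>i. u (k + 4) i + \<alpha>3 * u (k + 3) i + \<alpha>2 * u (k + 2) i + \<alpha>1 * u (k + 1) i)"
  defines "\<gamma> \<equiv> G4 \<alpha>1 \<alpha>2 \<alpha>3 (-p) (-q) / (p - q)" and "H \<equiv> H2 \<alpha>2 \<alpha>3 p q"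
  shows "(\<lambda>i. c i * u k i) = (\<lambda>i. v (k + 2) i - (p + q - \<alpha>3) * v (k + 1) i + H * v k i
                                 - \<gamma> * t k i + (\<gamma> * p - H * p * q) * u k i)"
  unfolding disp \<gamma>_def G4_div_diff[OF pq] H_def H2_def v t col_shift_def
  by (rule ext) (simp add: algebra_simps power2_eq_square power3_eq_cube numeral_eq_Suc)

lemma plucker_dispersion:
  fixes u t v :: "nat \<Rightarrow> nat \<Rightarrow> complex" and V :: "(nat \<Rightarrow> complex) list"
  assumes pq: "p \<noteq> q" and t: "t = col_shift p u" and v: "v = col_shift q t"
    and disp: "\<And>k. (\<lambda>i. c i * u k i)
                 = (\<lambda>i. u (k + 4) i + \<alpha>3 * u (k + 3) i + \<alpha>2 * u (k + 2) i + \<alpha>1 * u (k + 1) i)"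
  shows "(\<Sum>k<Suc N. (-1) ^ k * coldet N (map u ([0..<k] @ [Suc k..<Suc N]))
            * (coldet N (V @ [v (k + 2)]) - (p + q - \<alpha>3) * coldet N (V @ [v (k + 1)])
               + H2 \<alpha>2 \<alpha>3 p q * coldet N (V @ [v k])))
       = G4 \<alpha>1 \<alpha>2 \<alpha>3 (-p) (-q) / (p - q)
         * (\<Sum>k<Suc N. (-1) ^ k * coldet N (map u ([0..<k] @ [Suc k..<Suc N])) * coldet N (V @ [t k]))"
proof -
  define \<gamma> where "\<gamma> = G4 \<alpha>1 \<alpha>2 \<alpha>3 (-p) (-q) / (p - q)"
  define H where "H = H2 \<alpha>2 \<alpha>3 p q"
  obtain K where K: "\<And>z. coldet N (V @ [z]) = (\<Sum>i<N. z i * K i)"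
    using coldet_linear_form by blast
  define d where "d k = coldet N (map u ([0..<k] @ [Suc k..<Suc N]))" for k
  define a where "a k = coldet N (V @ [u k])" for k
  define \<tau> where "\<tau> k = coldet N (V @ [t k])" for k
  define X where "X k = coldet N (V @ [v (k + 2)]) - (p + q - \<alpha>3) * coldet N (V @ [v (k + 1)])
                        + H * coldet N (V @ [v k])" for k
  have disp_col: "coldet N (V @ [\<lambda>i. c i * u k i]) = X k - \<gamma> * \<tau> k + (\<gamma> * p - H * p * q) * a k" for k
    unfolding dispersion_col_shift[OF pq t v disp, folded \<gamma>_def H_def] X_def \<tau>_def a_def K
    by (simp add: sum.distrib sum_subtractf sum_distrib_left algebra_simps)
  have plucker_c: "(\<Sum>k<Suc N. (-1) ^ k * d k * coldet N (V @ [\<lambda>i. c i * u k i])) = 0"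
    unfolding d_def
    by (rule coldet_plucker_upt[where \<phi> = "\<lambda>z. coldet N (V @ [\<lambda>i. c i * z i])" and K = "\<lambda>i. c i * K i"])
       (simp add: K algebra_simps)
  have plucker_1: "(\<Sum>k<Suc N. (-1) ^ k * d k * a k) = 0"
    unfolding d_def a_def by (rule coldet_plucker_upt_append)
  have "(-1) ^ k * d k * coldet N (V @ [\<lambda>i. c i * u k i])
      = (-1) ^ k * d k * X k - \<gamma> * ((-1) ^ k * d k * \<tau> k) + (\<gamma> * p - H * p * q) * ((-1) ^ k * d k * a k)" for k
    by (simp add: disp_col algebra_simps)
  then have "(\<Sum>k<Suc N. (-1) ^ k * d k * X k) = \<gamma> * (\<Sum>k<Suc N. (-1) ^ k * d k * \<tau> k)"
    using plucker_c plucker_1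
    by (simp add: sum.distrib sum_subtractf del: sum.lessThan_Suc flip: sum_distrib_left)
  then show ?thesis by (simp add: d_def X_def \<tau>_def \<gamma>_def H_def)
qed

lemma bilinear_dispersion:
  fixes u t r v :: "nat \<Rightarrow> nat \<Rightarrow> complex"
  assumes N: "1 \<le> N" and pq: "p \<noteq> q"
    and t: "t = col_shift p u" and r: "r = col_shift q u" and v: "v = col_shift q t"
    and disp: "\<And>k. (\<lambda>i. c i * u k i)
                 = (\<lambda>i. u (k + 4) i + \<alpha>3 * u (k + 3) i + \<alpha>2 * u (k + 2) i + \<alpha>1 * u (k + 1) i)"
  shows "G4 \<alpha>1 \<alpha>2 \<alpha>3 (-p) (-q) / (p - q) * (cas_f N u * cas_f N v - cas_f N t * cas_f N r)
         + H2 \<alpha>2 \<alpha>3 p q * (cas_g N u * cas_f N v - cas_f N u * cas_g N v)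
         - (p + q - \<alpha>3) * (cas_g N u * cas_g N v - cas_f N u * cas_h N v - cas_f N v * cas_s N u)
         + cas_g N u * cas_h N v - cas_s N u * cas_g N v - cas_f N u * cas_mu N v
         + cas_nu N u * cas_f N v = 0"
proof -
  define \<gamma> where "\<gamma> = G4 \<alpha>1 \<alpha>2 \<alpha>3 (-p) (-q) / (p - q)"
  define H where "H = H2 \<alpha>2 \<alpha>3 p q"
  define h where "h = p + q - \<alpha>3"
  obtain M where M: "N = Suc M" using N by (cases N) auto
  define V where "V = map v [0..<M]"
  define d where "d k = coldet N (map u ([0..<k] @ [Suc k..<Suc N]))" for k
  define w where "w k = coldet N (V @ [v k])" for k
  define S where "S = (\<Sum>k<Suc N. (-1) ^ k * d k * (w (k + 2) - h * w (k + 1) + H * w k))"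
  have tail: "(-1) ^ N * S
      = cas_f N u * (cas_mu N v - h * cas_h N v + H * cas_g N v) - cas_g N u * (cas_h N v - h * cas_g N v + H * cas_f N v)
        + cas_s N u * (cas_g N v - h * cas_f N v) - cas_nu N u * cas_f N v"
  proof -
    have "w j = 0" if "j < M" for j
      using that by (simp add: w_def V_def coldet_not_distinct)
    from alternating_minor_sum_tail[OF M this, where u = u and h = h and H = H]
    show ?thesis
      using M by (simp add: S_def d_def w_def V_def cas_f_def cas_g_def cas_h_def cas_mu_def)
  qed
  have "S = \<gamma> * ((-1) ^ M * (cas_f N t * cas_f N r - cas_f N u * cas_f N v))"
    using plucker_dispersion[OF pq t v disp, of N V] coldet_alternating_pairing[OF M, of u q t]
    by (simp add: S_def d_def w_def \<gamma>_def H_def h_def V_def r v cas_f_def)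
  then have "(-1) ^ N * S = - (\<gamma> * (cas_f N t * cas_f N r - cas_f N u * cas_f N v))"
    using M by (simp add: ac_simps) (simp add: algebra_simps)
  then show ?thesis
    unfolding \<gamma>_def H_def h_def tail by (simp add: algebra_simps)
qed

section \<open>The Casoratian entries\<close>

lemma psi_swap_pq: "psi \<omega> \<rho> p q a b s n m al be l = psi \<omega> \<rho> q p a b s m n al be l"
  by (simp add: psi_def ac_simps)

lemma psi_shift_n:
  assumes "\<And>j. j \<in> {1..4} \<Longrightarrow> \<omega> j s \<noteq> p"
  shows "psi \<omega> \<rho> p q a b s (n + 1) m al be (int k)
       = p * psi \<omega> \<rho> p q a b s n m al be (int k) + psi \<omega> \<rho> p q a b s n m al be (int (Suc k))"
proof -
  define R where "R j = \<rho> j s * (q - \<omega> j s) powi m * (a - \<omega> j s) powi al * (b - \<omega> j s) powi be" for j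
  have psi_R: "psi \<omega> \<rho> p q a b s n' m al be (int l) = (\<Sum>j=1..4. (- \<omega> j s) ^ l * (p - \<omega> j s) powi n' * R j)"
    for n' l by (simp add: psi_def R_def power_int_of_nat ac_simps)
  have "(- \<omega> j s) ^ k * (p - \<omega> j s) powi (n + 1) * Q
      = p * ((- \<omega> j s) ^ k * (p - \<omega> j s) powi n * Q) + (- \<omega> j s) ^ Suc k * (p - \<omega> j s) powi n * Q"
    if "j \<in> {1..4}" for j Q
  proof -
    have "p - \<omega> j s \<noteq> 0" using assms[OF that] by simp
    then have "(p - \<omega> j s) powi (n + 1) = (p - \<omega> j s) powi n * (p - \<omega> j s)"
      by (simp add: power_int_add_1)
    then show ?thesis by (simp only:) (simp add: algebra_simps)
  qed
  then show ?thesis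
    unfolding psi_R by (simp add: sum_distrib_left sum.distrib[symmetric])
qed

lemma psi_dispersion:
  assumes roots: "\<And>x. x^4 - \<alpha>3 * x^3 + \<alpha>2 * x^2 - \<alpha>1 * x - c = (\<Prod>j=1..4. x - \<omega> j s)"
  shows "c * psi \<omega> \<rho> p q a b s n m al be (int k)
       = psi \<omega> \<rho> p q a b s n m al be (int (k + 4)) + \<alpha>3 * psi \<omega> \<rho> p q a b s n m al be (int (k + 3))
         + \<alpha>2 * psi \<omega> \<rho> p q a b s n m al be (int (k + 2)) + \<alpha>1 * psi \<omega> \<rho> p q a b s n m al be (int (k + 1))"
proof -
  define R where "R j = \<rho> j s * (p - \<omega> j s) powi n * (q - \<omega> j s) powi m * (a - \<omega> j s) powi al
                          * (b - \<omega> j s) powi be" for j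
  have psi_R: "psi \<omega> \<rho> p q a b s n m al be (int l) = (\<Sum>j=1..4. (- \<omega> j s) ^ l * R j)" for l
    by (simp add: psi_def R_def power_int_of_nat ac_simps)
  have "c * ((- \<omega> j s) ^ k * Q) = (- \<omega> j s) ^ (k + 4) * Q + \<alpha>3 * ((- \<omega> j s) ^ (k + 3) * Q)
          + \<alpha>2 * ((- \<omega> j s) ^ (k + 2) * Q) + \<alpha>1 * ((- \<omega> j s) ^ (k + 1) * Q)"
    if "j \<in> {1..4}" for j Q
  proof -
    have "(\<Prod>i=1..4. \<omega> j s - \<omega> i s) = 0"
      using that by (intro prod_zero) auto
    then have "(\<omega> j s)^4 - \<alpha>3 * (\<omega> j s)^3 + \<alpha>2 * (\<omega> j s)^2 - \<alpha>1 * \<omega> j s - c = 0"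
      by (simp only: roots)
    then have "c = (\<omega> j s)^4 - \<alpha>3 * (\<omega> j s)^3 + \<alpha>2 * (\<omega> j s)^2 - \<alpha>1 * \<omega> j s"
      by (metis right_minus_eq)
    then show ?thesis
      by (simp only:) (simp add: power_add algebra_simps power2_eq_square power3_eq_cube power4_eq_xxxx)
  qed
  then show ?thesis
    unfolding psi_R by (simp add: sum_distrib_left sum.distrib[symmetric])
qed

(* Row i holds psi_(i+1); the rows beyond N are padded with zeros, which keeps the
   shift relations exact equalities of functions. *)
definition psi_cols ::
    "(nat \<Rightarrow> nat \<Rightarrow> complex) \<Rightarrow> (nat \<Rightarrow> nat \<Rightarrow> complex) \<Rightarrow> complex \<Rightarrow> complex \<Rightarrow> complex \<Rightarrow> complex \<Rightarrow>
     nat \<Rightarrow> int \<Rightarrow> int \<Rightarrow> int \<Rightarrow> int \<Rightarrow> nat \<Rightarrow> nat \<Rightarrow> complex" where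
  "psi_cols \<omega> \<rho> p q a b N n m al be l =
     (\<lambda>i. if i < N then psi \<omega> \<rho> p q a b (Suc i) n m al be (int l) else 0)"

lemma psi_cols_swap_pq:
  "psi_cols \<omega> \<rho> p q a b N n m al be = psi_cols \<omega> \<rho> q p a b N m n al be"
  by (intro ext) (simp add: psi_cols_def psi_swap_pq[of _ _ p q])

lemma psi_cols_shift_n:
  assumes "\<And>s j. s \<in> {1..N} \<Longrightarrow> j \<in> {1..4} \<Longrightarrow> \<omega> j s \<noteq> p"
  shows "psi_cols \<omega> \<rho> p q a b N (n + 1) m al be = col_shift p (psi_cols \<omega> \<rho> p q a b N n m al be)"
proof (intro ext)
  fix l i
  show "psi_cols \<omega> \<rho> p q a b N (n + 1) m al be l i = col_shift p (psi_cols \<omega> \<rho> p q a b N n m al be) l i"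
  proof (cases "i < N")
    case True
    then have "\<And>j. j \<in> {1..4} \<Longrightarrow> \<omega> j (Suc i) \<noteq> p" using assms by simp
    from psi_shift_n[where \<omega> = \<omega> and s = "Suc i", OF this] show ?thesis
      using True by (simp add: psi_cols_def col_shift_def)
  qed (simp add: psi_cols_def col_shift_def)
qed

lemma psi_cols_shift_m:
  assumes "\<And>s j. s \<in> {1..N} \<Longrightarrow> j \<in> {1..4} \<Longrightarrow> \<omega> j s \<noteq> q"
  shows "psi_cols \<omega> \<rho> p q a b N n (m + 1) al be = col_shift q (psi_cols \<omega> \<rho> p q a b N n m al be)"
  using psi_cols_shift_n[of N \<omega> q \<rho> p a b m n al be, OF assms] by (simp only: psi_cols_swap_pq[of _ _ p q])

lemma psi_cols_dispersion:
  fixes \<rho> :: "nat \<Rightarrow> nat \<Rightarrow> complex" and p q a b :: complex and n m al be :: int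
  assumes "\<And>s x. s \<in> {1..N} \<Longrightarrow>
      x^4 - \<alpha>3 * x^3 + \<alpha>2 * x^2 - \<alpha>1 * x - (\<kappa> s ^ 4 - \<alpha>3 * \<kappa> s ^ 3 + \<alpha>2 * \<kappa> s ^ 2 - \<alpha>1 * \<kappa> s)
        = (\<Prod>j=1..4. x - \<omega> j s)"
  defines "U \<equiv> psi_cols \<omega> \<rho> p q a b N n m al be"
  shows "(\<lambda>i. (\<kappa> (Suc i) ^ 4 - \<alpha>3 * \<kappa> (Suc i) ^ 3 + \<alpha>2 * \<kappa> (Suc i) ^ 2 - \<alpha>1 * \<kappa> (Suc i)) * U k i)
       = (\<lambda>i. U (k + 4) i + \<alpha>3 * U (k + 3) i + \<alpha>2 * U (k + 2) i + \<alpha>1 * U (k + 1) i)"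
proof
  fix i
  show "(\<kappa> (Suc i) ^ 4 - \<alpha>3 * \<kappa> (Suc i) ^ 3 + \<alpha>2 * \<kappa> (Suc i) ^ 2 - \<alpha>1 * \<kappa> (Suc i)) * U k i
      = U (k + 4) i + \<alpha>3 * U (k + 3) i + \<alpha>2 * U (k + 2) i + \<alpha>1 * U (k + 1) i"
  proof (cases "i < N")
    case True
    then have "Suc i \<in> {1..N}" by simp
    from psi_dispersion[where \<omega> = \<omega> and s = "Suc i", OF assms(1)[OF this]] show ?thesis
      using True by (simp add: U_def psi_cols_def)
  qed (simp add: U_def psi_cols_def)
qed

lemma upto_eq_map_int_upt: "[0..i] = map int [0..<nat (i + 1)]"
proof (induction "nat (i + 1)" arbitrary: i)
  case (Suc K)
  then have "0 \<le> i" "K = nat i" by arith+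
  then have "[0..i] = [0..i - 1] @ [int K]" by (simp add: upto_rec2)
  also have "[0..i - 1] = map int [0..<K]" using Suc.hyps(1)[of "i - 1"] \<open>K = nat i\<close> by simp
  finally show ?case unfolding \<open>Suc K = nat (i + 1)\<close>[symmetric] by simp
qed simp

lemma casoratian_map_int:
  "casoratian \<omega> \<rho> p q a b N n m al be (map int L) = coldet N (map (psi_cols \<omega> \<rho> p q a b N n m al be) L)"
proof (cases "length L = N")
  case True
  have "mat N N (\<lambda>(i, j). psi \<omega> \<rho> p q a b (Suc i) n m al be (map int L ! j))
      = mat N N (\<lambda>(i, j). (map (psi_cols \<omega> \<rho> p q a b N n m al be) L ! j) i)"
    using True by (intro eq_matI) (simp_all add: psi_cols_def)
  then show ?thesis using True by (simp add: casoratian_def coldet_def)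
qed (simp add: casoratian_def coldet_def)

lemma casoratians_eq_cas:
  fixes \<omega> \<rho> :: "nat \<Rightarrow> nat \<Rightarrow> complex" and p q a b :: complex and n m al be :: int
  assumes "1 \<le> N"
  defines "C \<equiv> casoratian \<omega> \<rho> p q a b N n m al be" and "U \<equiv> psi_cols \<omega> \<rho> p q a b N n m al be"
  shows "C [0..int N - 1] = cas_f N U"
    and "C ([0..int N - 2] @ [int N]) = cas_g N U"
    and "C ([0..int N - 2] @ [int N + 1]) = cas_h N U"
    and "C ([0..int N - 3] @ [int N - 1, int N]) = cas_s N U"
    and "C ([0..int N - 2] @ [int N + 2]) = cas_mu N U"
    and "C ([0..int N - 3] @ [int N - 1, int N + 1]) = cas_theta N U"
    and "C ([0..int N - 4] @ [int N - 2, int N - 1, int N]) = cas_nu N U"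
proof -
  have C: "C L' = coldet N (map U L)" if "L' = map int L" for L L'
    unfolding C_def U_def that by (rule casoratian_map_int)
  have prefix: "[0..int N - 1] = map int [0..<N]" "[0..int N - 2] = map int [0..<N - 1]"
      "[0..int N - 3] = map int [0..<N - 2]" "[0..int N - 4] = map int [0..<N - 3]"
    using upto_eq_map_int_upt[of "int N - 1"] upto_eq_map_int_upt[of "int N - 2"]
      upto_eq_map_int_upt[of "int N - 3"] upto_eq_map_int_upt[of "int N - 4"]
    by (simp_all add: nat_diff_distrib')
  show "C [0..int N - 1] = cas_f N U"
    unfolding cas_f_def by (rule C) (simp add: prefix)
  show "C ([0..int N - 2] @ [int N]) = cas_g N U"
    unfolding cas_g_def by (rule C) (simp add: prefix)
  show "C ([0..int N - 2] @ [int N + 1]) = cas_h N U"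
    unfolding cas_h_def by (rule C) (simp add: prefix)
  show "C ([0..int N - 3] @ [int N - 1, int N]) = cas_s N U"
    unfolding cas_s_def using assms(1) by (intro C) (simp add: prefix of_nat_diff)
  show "C ([0..int N - 2] @ [int N + 2]) = cas_mu N U"
    unfolding cas_mu_def by (rule C) (simp add: prefix)
  show "C ([0..int N - 3] @ [int N - 1, int N + 1]) = cas_theta N U"
    unfolding cas_theta_def using assms(1) by (intro C) (simp add: prefix of_nat_diff)
  show "C ([0..int N - 4] @ [int N - 2, int N - 1, int N]) = cas_nu N U"
  proof (cases "N = 1")
    case True
    then show ?thesis by (simp add: C_def casoratian_def cas_nu_def coldet_length_neq)
  next
    case False
    then show ?thesis
      unfolding cas_nu_def using assms(1) by (intro C) (simp add: prefix of_nat_diff)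
  qed
qed

theorem theorem3p1:
  fixes \<alpha>1 \<alpha>2 \<alpha>3 p q a b :: complex
    and N :: nat and al be :: int
    and k :: "nat \<Rightarrow> complex"
    and \<omega> \<rho> :: "nat \<Rightarrow> nat \<Rightarrow> complex"
    and f g h s \<mu> \<theta> \<nu> :: "int \<Rightarrow> int \<Rightarrow> complex"
  assumes dist: "distinct [p, q, a, b]"
    and N1: "N \<ge> 1"
    and roots: "\<And>s x. s \<in> {1..N} \<Longrightarrow>
        x^4 - \<alpha>3 * x^3 + \<alpha>2 * x^2 - \<alpha>1 * x
          - (k s ^ 4 - \<alpha>3 * k s ^ 3 + \<alpha>2 * k s ^ 2 - \<alpha>1 * k s)
        = (\<Prod>j=1..4. x - \<omega> j s)"
    and root4: "\<And>s. s \<in> {1..N} \<Longrightarrow> \<omega> 4 s = k s"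
    and nondeg: "\<And>s j. s \<in> {1..N} \<Longrightarrow> j \<in> {1..4} \<Longrightarrow> \<omega> j s \<notin> {p, q, a, b}"
    and f_def: "f \<equiv> \<lambda>n m. casoratian \<omega> \<rho> p q a b N n m al be [0..int N - 1]"
    and g_def: "g \<equiv> \<lambda>n m. casoratian \<omega> \<rho> p q a b N n m al be ([0..int N - 2] @ [int N])"
    and h_def: "h \<equiv> \<lambda>n m. casoratian \<omega> \<rho> p q a b N n m al be ([0..int N - 2] @ [int N + 1])"
    and s_def: "s \<equiv> \<lambda>n m. casoratian \<omega> \<rho> p q a b N n m al be ([0..int N - 3] @ [int N - 1, int N])"
    and \<mu>_def: "\<mu> \<equiv> \<lambda>n m. casoratian \<omega> \<rho> p q a b N n m al be ([0..int N - 2] @ [int N + 2])"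
    and \<theta>_def: "\<theta> \<equiv> \<lambda>n m. casoratian \<omega> \<rho> p q a b N n m al be ([0..int N - 3] @ [int N - 1, int N + 1])"
    and \<nu>_def: "\<nu> \<equiv> \<lambda>n m. casoratian \<omega> \<rho> p q a b N n m al be ([0..int N - 4] @ [int N - 2, int N - 1, int N])"
  shows "f (n+1) m * (p * g n m + h n m) - g (n+1) m * (p * f n m + g n m) + f n m * s (n+1) m = 0
    \<and> f n (m+1) * (q * g n m + h n m) - g n (m+1) * (q * f n m + g n m) + f n m * s n (m+1) = 0
    \<and> f (n+1) m * (p * h n m + \<mu> n m) - h (n+1) m * (p * f n m + g n m) + f n m * \<theta> (n+1) m = 0
    \<and> f n (m+1) * (q * h n m + \<mu> n m) - h n (m+1) * (q * f n m + g n m) + f n m * \<theta> n (m+1) = 0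
    \<and> f (n+1) m * (p * s n m + \<theta> n m) - f n m * (p * s (n+1) m - \<nu> (n+1) m) - g (n+1) m * s n m = 0
    \<and> f n (m+1) * (q * s n m + \<theta> n m) - f n m * (q * s n (m+1) - \<nu> n (m+1)) - g n (m+1) * s n m = 0
    \<and> (p - q) * (f (n+1) m * f n (m+1) - f n m * f (n+1) (m+1))
        + f (n+1) m * g n (m+1) - f n (m+1) * g (n+1) m = 0
    \<and> G4 \<alpha>1 \<alpha>2 \<alpha>3 (-p) (-q) / (p - q) * (f n m * f (n+1) (m+1) - f (n+1) m * f n (m+1))
        + H2 \<alpha>2 \<alpha>3 p q * (g n m * f (n+1) (m+1) - f n m * g (n+1) (m+1))
        - (p + q - \<alpha>3) * (g n m * g (n+1) (m+1) - f n m * h (n+1) (m+1) - f (n+1) (m+1) * s n m)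
        + g n m * h (n+1) (m+1) - s n m * g (n+1) (m+1) - f n m * \<mu> (n+1) (m+1)
        + \<nu> n m * f (n+1) (m+1) = 0"
proof -
  define U where "U n m = psi_cols \<omega> \<rho> p q a b N n m al be" for n m
  have shift_n: "U (n + 1) m = col_shift p (U n m)" for n m
    unfolding U_def using nondeg by (intro psi_cols_shift_n) auto
  have shift_m: "U n (m + 1) = col_shift q (U n m)" for n m
    unfolding U_def using nondeg by (intro psi_cols_shift_m) auto
  have disp: "(\<lambda>i. (k (Suc i) ^ 4 - \<alpha>3 * k (Suc i) ^ 3 + \<alpha>2 * k (Suc i) ^ 2 - \<alpha>1 * k (Suc i)) * U n m j i)
      = (\<lambda>i. U n m (j + 4) i + \<alpha>3 * U n m (j + 3) i + \<alpha>2 * U n m (j + 2) i + \<alpha>1 * U n m (j + 1) i)" for j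
    unfolding U_def using roots by (rule psi_cols_dispersion)
  have pq: "p \<noteq> q" using dist by simp
  note cas = casoratians_eq_cas[OF N1, where \<omega> = \<omega> and \<rho> = \<rho> and p = p and q = q and a = a and b = b
      and al = al and be = be, folded U_def]
  have "f = (\<lambda>n m. cas_f N (U n m))" "g = (\<lambda>n m. cas_g N (U n m))" "h = (\<lambda>n m. cas_h N (U n m))"
    "s = (\<lambda>n m. cas_s N (U n m))" "\<mu> = (\<lambda>n m. cas_mu N (U n m))" "\<theta> = (\<lambda>n m. cas_theta N (U n m))"
    "\<nu> = (\<lambda>n m. cas_nu N (U n m))"
    unfolding f_def g_def h_def s_def \<mu>_def \<theta>_def \<nu>_def cas by simp_all
  then show ?thesis
    using bilinear_f_g_h_s[OF N1 shift_n] bilinear_f_g_h_s[OF N1 shift_m]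
      bilinear_f_h_mu_theta[OF N1 shift_n] bilinear_f_h_mu_theta[OF N1 shift_m]
      bilinear_f_s_theta_nu[OF N1 shift_n] bilinear_f_s_theta_nu[OF N1 shift_m]
      bilinear_f_g_two_shifts[OF N1 shift_n shift_m shift_n]
      bilinear_dispersion[OF N1 pq shift_n shift_m shift_m disp]
    by simp
qed

end
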